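(* Let $q\in\mathbb{C}$ with $0<|q|<1$ and $l,m,n,u\in\mathbb{N}$. Then \[ \sum_{k=0}^\infty\frac{q^{k^2} (q)_{l+m+n-k}} {(q)_k (q)_{l-k}(q)_{m-k}(q)_{n-k} (q)_{u+k}} =\sum_{k=-\infty}^\infty\frac{(-1)^k q^{(5k^2-k)/2} (q)_{l+m}(q)_{l+n}(q)_{m+n}(q)_{u-1}} {(q)_{l-k}(q)_{m-k}(q)_{n-k}(q)_{u-k}(q)_{l+k}(q)_{m+k}(q)_{n+k}(q)_{u+k-1}}, \] and \[ \sum_{k=0}^\infty\frac{q^{k^2+k} (q)_{l+m+n-k}} {(q)_k (q)_{l-k}(q)_{m-k}(q)_{n-k}(q)_{u+k}} =\sum_{k=-\infty}^\infty\frac{(-1)^k q^{(5k^2-3k)/2} (q)_{l+m}(q)_{m+n}(q)_{l+n}(q)_{u-1}} {(q)_{l-k}(q)_{m-k}(q)_{n-k}(q)_{u-k}(q)_{l+k}(q)_{m+k}(q)_{n+k}(q)_{u+k-1}}. \]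
   Context: For an integer $n$, $(q)_n=(q;q)_n$ with $(q)_0=1$, $(q)_n=(1-q)(1-q^2)\cdots(1-q^n)$ for $n\ge1$, and $(q)_n=[(1-q^{0})\cdots]$ interpreted via $(a)_n=[(1-aq^{-1})(1-aq^{-2})\cdots(1-aq^{n})]^{-1}$ for $n\le-1$ with $a=q$; in particular $(q)_{-1}=1/(1-q^{0})$ is not used as a value except through the convention $1/(q)_n=0$ for $n<0$. *)

theory Defs
  imports "HOL-Analysis.Analysis"
begin

definition qpoch :: "complex \<Rightarrow> nat \<Rightarrow> complex" where
  "qpoch q n = (\<Prod>i\<in>{1..n}. 1 - q ^ i)"

definition qpinv :: "complex \<Rightarrow> int \<Rightarrow> complex" where
  "qpinv q n = (if n < 0 then 0 else 1 / qpoch q (nat n))"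

end

theory Submission
  imports Defs
begin

text \<open>Both sides are finite sums, and everything is driven by the kernels
  \<open>1/((q)_{j-k} (q)_{j+k})\<close>. The finite q-binomial theorem makes them orthogonal against
  \<open>(-1)^k q^{k(k-1)/2}\<close>, and q-Vandermonde expands a product of two kernels, with or without the
  weight \<open>q^{k^2}\<close>, as a combination of single kernels. Expanding twice turns the bilateral sum with
  \<open>q^{(5k^2-k)/2}\<close> and four kernels first into a q-Dixon sum and then, after one more Vandermonde
  step on the unilateral side, into the left-hand side of the first identity with \<open>(q)_u\<close> in place
  of \<open>(q)_{u-1}\<close>. The stated forms follow from \<open>1/(q)_{u+k-1} = (1 - q^{u+k})/(q)_{u+k}\<close>, the
  symmetry \<open>k \<mapsto> -k\<close> of the bilateral sums, and, for the second identity, the difference of the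
  left-hand sides at \<open>u\<close> and \<open>u - 1\<close>.\<close>

section \<open>Sums of finitely supported functions\<close>

text \<open>By the convention for \<^const>\<open>sum\<close> this is \<open>0\<close> when the support is infinite; all sums below
  are finitely supported.\<close>

definition supp_sum :: "('a \<Rightarrow> 'b::comm_monoid_add) \<Rightarrow> 'b" where
  "supp_sum f = sum f {i. f i \<noteq> 0}"

lemma supp_sum_eq_sum:
  assumes "finite A" and "\<And>i. i \<notin> A \<Longrightarrow> f i = 0"
  shows "supp_sum f = sum f A"
  unfolding supp_sum_def using assms by (intro sum.mono_neutral_left) auto

lemma supp_sum_single: "(\<And>i. i \<noteq> a \<Longrightarrow> f i = 0) \<Longrightarrow> supp_sum f = f a"
  by (subst supp_sum_eq_sum[of "{a}"]) auto

lemma supp_sum_cmult: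
  fixes f :: "'a \<Rightarrow> 'b::semiring_no_zero_divisors"
  shows "supp_sum (\<lambda>i. c * f i) = c * supp_sum f"
  by (cases "c = 0") (simp_all add: supp_sum_def sum_distrib_left)

lemma supp_sum_add:
  assumes "finite A" and "\<And>i. i \<notin> A \<Longrightarrow> f i = 0" and "\<And>i. i \<notin> A \<Longrightarrow> g i = 0"
  shows "supp_sum (\<lambda>i. f i + g i) = supp_sum f + supp_sum g"
  using assms by (simp add: supp_sum_eq_sum[of A] sum.distrib)

lemma supp_sum_diff:
  fixes f :: "'a \<Rightarrow> 'b::ab_group_add"
  assumes "finite A" and "\<And>i. i \<notin> A \<Longrightarrow> f i = 0" and "\<And>i. i \<notin> A \<Longrightarrow> g i = 0"
  shows "supp_sum (\<lambda>i. f i - g i) = supp_sum f - supp_sum g"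
  using assms by (simp add: supp_sum_eq_sum[of A] sum_subtractf)

lemma supp_sum_reindex: "bij h \<Longrightarrow> supp_sum (\<lambda>i. f (h i)) = supp_sum f"
  unfolding supp_sum_def
  by (rule sum.reindex_bij_betw) (auto simp: bij_betw_def bij_def inj_on_def surj_def)

lemma supp_sum_shift: "supp_sum (\<lambda>i. f (i + c)) = supp_sum (f :: int \<Rightarrow> _)"
  using supp_sum_reindex[OF bij_plus_right] .

lemma supp_sum_reflect: "supp_sum (\<lambda>i. f (c - i)) = supp_sum (f :: int \<Rightarrow> _)"
  by (rule supp_sum_reindex) (auto simp: bij_def inj_def surj_def intro: exI[of _ "c - _"])

lemma supp_sum_swap:
  assumes "finite A" and "finite B" and "\<And>i j. g i j \<noteq> 0 \<Longrightarrow> i \<in> A \<and> j \<in> B"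
  shows "supp_sum (\<lambda>i. supp_sum (g i)) = supp_sum (\<lambda>j. supp_sum (\<lambda>i. g i j))"
proof -
  have inner: "supp_sum (g i) = sum (g i) B" "supp_sum (\<lambda>i. g i j) = sum (\<lambda>i. g i j) A" for i j
    using assms by (auto intro: supp_sum_eq_sum)
  have "supp_sum (\<lambda>i. sum (g i) B) = sum (\<lambda>i. sum (g i) B) A"
    using assms by (intro supp_sum_eq_sum) (auto intro!: sum.neutral)
  moreover have "supp_sum (\<lambda>j. sum (\<lambda>i. g i j) A) = sum (\<lambda>j. sum (\<lambda>i. g i j) A) B"
    using assms by (intro supp_sum_eq_sum) (auto intro!: sum.neutral)
  ultimately show ?thesis
    unfolding inner by (simp add: sum.swap[of _ A])
qed

lemma supp_sum_swap_mult:
  fixes w :: "'a \<Rightarrow> 'c::{comm_semiring_0, semiring_no_zero_divisors}"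
  assumes "finite A" and "finite B" and "\<And>j k. h k * (w j * g j k) \<noteq> 0 \<Longrightarrow> j \<in> A \<and> k \<in> B"
  shows "supp_sum (\<lambda>k. h k * supp_sum (\<lambda>j. w j * g j k)) = supp_sum (\<lambda>j. w j * supp_sum (\<lambda>k. h k * g j k))"
proof -
  have "supp_sum (\<lambda>k. supp_sum (\<lambda>j. h k * (w j * g j k)))
      = supp_sum (\<lambda>j. supp_sum (\<lambda>k. w j * (h k * g j k)))"
    using supp_sum_swap[of B A "\<lambda>k j. h k * (w j * g j k)"] assms
    by (force simp: algebra_simps)
  then show ?thesis
    by (simp add: supp_sum_cmult)
qed

lemma infsum_eq_supp_sum:
  fixes f :: "'a \<Rightarrow> 'b::{comm_monoid_add, t2_space}"
  assumes "finite A" and "\<And>i. i \<notin> A \<Longrightarrow> f i = 0"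
  shows "infsum f UNIV = supp_sum f"
proof -
  have "infsum f UNIV = infsum f A"
    using assms by (intro infsum_cong_neutral) auto
  then show ?thesis
    using assms by (simp add: supp_sum_eq_sum[of A])
qed

lemma suminf_eq_supp_sum:
  fixes f :: "int \<Rightarrow> 'b::{comm_monoid_add, t2_space}"
  assumes "\<And>i. i \<notin> {0..int N} \<Longrightarrow> f i = 0"
  shows "(\<Sum>k. f (int k)) = supp_sum f"
proof -
  have "(\<Sum>k. f (int k)) = (\<Sum>k\<in>{0..N}. f (int k))"
    using assms by (intro suminf_finite) auto
  also have "\<dots> = sum f (int ` {0..N})"
    by (simp add: sum.reindex)
  also have "int ` {0..N} = {0..int N}"
    by (simp add: image_int_atLeastAtMost)
  finally show ?thesis
    using supp_sum_eq_sum[of "{0..int N}" f] assms by simp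
qed

lemma qpoch_Suc: "qpoch q (Suc n) = qpoch q n * (1 - q ^ Suc n)"
  unfolding qpoch_def by (simp add: prod.nat_ivl_Suc')

lemma qpinv_neg: "n < 0 \<Longrightarrow> qpinv q n = 0"
  by (simp add: qpinv_def)

definition qbinom :: "complex \<Rightarrow> int \<Rightarrow> int \<Rightarrow> complex" where
  "qbinom q n k = qpoch q (nat n) * qpinv q k * qpinv q (n - k)"

lemma qbinom_eq_0: "k < 0 \<or> n < k \<Longrightarrow> qbinom q n k = 0"
  by (auto simp: qbinom_def qpinv_neg)

definition qpinv_pm :: "complex \<Rightarrow> int \<Rightarrow> int \<Rightarrow> complex" where
  "qpinv_pm q a k = qpinv q (a - k) * qpinv q (a + k)"

lemma qpinv_pm_eq_0: "a < k \<or> a < - k \<Longrightarrow> qpinv_pm q a k = 0"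
  by (auto simp: qpinv_pm_def qpinv_neg)

lemma qpinv_pm_neg: "a < 0 \<Longrightarrow> qpinv_pm q a k = 0"
  by (rule qpinv_pm_eq_0) linarith

lemma qpinv_pm_uminus: "qpinv_pm q a (- k) = qpinv_pm q a k"
  by (simp add: qpinv_pm_def mult.commute)

lemma qpinv_pm_nonzero_imp: "qpinv_pm q a k \<noteq> 0 \<Longrightarrow> \<bar>k\<bar> \<le> a"
  using qpinv_pm_eq_0[of a k q] by linarith

lemma triangular_add:
  fixes a b :: int
  shows "(a + b) * (a + b - 1) div 2 = a * (a - 1) div 2 + b * (b - 1) div 2 + a * b"
proof -
  have "even (c * (c - 1))" for c :: int
    by (cases "even c") auto
  then obtain x y where "a * (a - 1) = 2 * x" and "b * (b - 1) = 2 * y"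
    by (meson evenE)
  moreover have "(a + b) * (a + b - 1) = a * (a - 1) + b * (b - 1) + 2 * (a * b)"
    by (simp add: algebra_simps)
  ultimately show ?thesis
    by simp
qed

text \<open>The hypothesis \<open>0 < |q| < 1\<close> of the theorem is only used through the invertibility of \<open>q\<close>
  and of all \<open>(q)_n\<close>.\<close>

locale generic_q =
  fixes q :: complex
  assumes nonzero: "q \<noteq> 0"
    and not_root_of_unity: "n > 0 \<Longrightarrow> q ^ n \<noteq> 1"
begin

lemma qpoch_nonzero: "qpoch q n \<noteq> 0"
  using not_root_of_unity by (auto simp: qpoch_def)

lemma qpinv_eq_0_iff: "qpinv q n = 0 \<longleftrightarrow> n < 0"
  by (simp add: qpinv_def qpoch_nonzero)

lemma qpinv_qpoch: "0 \<le> n \<Longrightarrow> qpinv q n * qpoch q (nat n) = 1"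
  by (simp add: qpinv_def qpoch_nonzero)

lemma qpoch_mult_eq_iff: "0 \<le> a \<Longrightarrow> qpoch q (nat a) * x = y \<longleftrightarrow> x = qpinv q a * y"
  by (auto simp: qpinv_def qpoch_nonzero field_simps)

lemma powi_add: "q powi (a + b) = q powi a * q powi b"
  using nonzero by (simp add: power_int_add)

lemma qpoch_nat_succ: "0 \<le> n \<Longrightarrow> qpoch q (nat (n + 1)) = qpoch q (nat n) * (1 - q powi (n + 1))"
  by (induction n rule: int_ge_induct) (auto simp: qpoch_Suc nat_add_distrib power_int_def)

lemma qpinv_rec: "qpinv q n = (1 - q powi (n + 1)) * qpinv q (n + 1)"
proof (cases "n < 0")
  case True
  then show ?thesis by (cases "n = -1") (auto simp: qpinv_neg)
next
  case False
  then show ?thesis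
    using qpoch_nat_succ[of n] qpoch_nonzero not_root_of_unity[of "nat (n + 1)"]
    by (auto simp: qpinv_def power_int_def field_simps)
qed

lemma qbinom_pascal:
  assumes "0 \<le> n"
  shows "qbinom q (n + 1) k = q powi (n + 1 - k) * qbinom q n (k - 1) + qbinom q n k"
proof -
  have lower: "qpinv q (k - 1) = (1 - q powi k) * qpinv q k"
    using qpinv_rec[of "k - 1"] by simp
  have upper: "qpinv q (n - k) = (1 - q powi (n + 1 - k)) * qpinv q (n + 1 - k)"
    using qpinv_rec[of "n - k"] by (simp add: algebra_simps)
  have "q powi (n + 1 - k) * qbinom q n (k - 1) + qbinom q n k
      = qpoch q (nat n) * qpinv q k * qpinv q (n + 1 - k)
        * (q powi (n + 1 - k) * (1 - q powi k) + (1 - q powi (n + 1 - k)))"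
    unfolding qbinom_def lower upper by (simp add: algebra_simps)
  also have "\<dots> = qpoch q (nat n) * (1 - q powi (n + 1)) * qpinv q k * qpinv q (n + 1 - k)"
    using powi_add[of "n + 1 - k" k] by (simp add: algebra_simps)
  also have "\<dots> = qbinom q (n + 1) k"
    using assms by (simp add: qbinom_def qpoch_nat_succ)
  finally show ?thesis ..
qed

section \<open>q-Vandermonde, the q-binomial theorem and orthogonality\<close>

lemma qbinom_vandermonde:
  assumes "0 \<le> d"
  shows "supp_sum (\<lambda>i. q powi (i * (d - b + i)) * qbinom q (int N) i * qbinom q d (b - i))
    = qbinom q (int N + d) b"
proof (induction N arbitrary: b)
  case 0
  show ?case
    by (subst supp_sum_single[of 0]) (auto simp: qbinom_eq_0 qbinom_def qpinv_def qpoch_def)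
next
  case (Suc N)
  define t where "t N b = (\<lambda>i. q powi (i * (d - b + i)) * qbinom q (int N) i * qbinom q d (b - i))"
    for N b
  have IH: "supp_sum (t N b') = qbinom q (int N + d) b'" for b'
    using Suc.IH by (simp add: t_def)
  have split: "t (Suc N) b i = q powi (int N + d + 1 - b) * t N (b - 1) (i - 1) + t N b i" for i
  proof -
    have "q powi (i * (d - b + i)) * q powi (int N + 1 - i)
        = q powi (int N + d + 1 - b) * q powi ((i - 1) * (d - (b - 1) + (i - 1)))"
      unfolding powi_add[symmetric] by (simp add: algebra_simps)
    then show ?thesis
      using qbinom_pascal[of "int N" i] by (simp add: t_def algebra_simps)
  qed
  have "supp_sum (t (Suc N) b)
      = q powi (int N + d + 1 - b) * supp_sum (\<lambda>i. t N (b - 1) (i - 1)) + supp_sum (t N b)"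
    unfolding split supp_sum_cmult[symmetric]
    by (rule supp_sum_add[of "{0..int N + 1}"]) (auto simp: t_def qbinom_eq_0)
  also have "\<dots> = q powi (int N + d + 1 - b) * qbinom q (int N + d) (b - 1) + qbinom q (int N + d) b"
    using supp_sum_shift[of "t N (b - 1)" "-1"] by (simp add: IH)
  also have "\<dots> = qbinom q (int (Suc N) + d) b"
    using qbinom_pascal[of "int N + d" b] assms by (simp add: algebra_simps)
  finally show ?case
    by (simp add: t_def)
qed

lemma q_vandermonde:
  "supp_sum (\<lambda>i. q powi (i * (d - b + i)) * qpinv q i * qpinv q (N - i) * qpinv q (b - i) * qpinv q (d - b + i))
    = qpoch q (nat (N + d)) * qpinv q N * qpinv q d * qpinv q b * qpinv q (N + d - b)"
proof (cases "N < 0 \<or> d < 0")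
  case True
  then have "qpinv q i * qpinv q (N - i) * qpinv q (b - i) * qpinv q (d - b + i) = 0" for i
    by (auto simp: qpinv_eq_0_iff)
  then show ?thesis
    using True by (auto simp: supp_sum_def qpinv_neg)
next
  case False
  then obtain M where M: "N = int M"
    by (metis nonneg_eq_int not_less)
  have "qpoch q (nat N) * (qpoch q (nat d) * supp_sum (\<lambda>i. q powi (i * (d - b + i))
      * qpinv q i * qpinv q (N - i) * qpinv q (b - i) * qpinv q (d - b + i)))
    = qpoch q (nat (N + d)) * qpinv q b * qpinv q (N + d - b)"
    using qbinom_vandermonde[of d b M] False
    by (simp add: M qbinom_def supp_sum_cmult[symmetric] algebra_simps)
  then show ?thesis
    using False by (simp add: qpoch_mult_eq_iff)
qed

lemma q_vandermonde':
  "supp_sum (\<lambda>i. q powi ((N - i) * (b - i)) * qpinv q i * qpinv q (N - i) * qpinv q (b - i) * qpinv q (d - b + i))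
    = qpoch q (nat (N + d)) * qpinv q N * qpinv q d * qpinv q b * qpinv q (N + d - b)"
proof -
  define f where "f j = q powi (j * (d - (N + d - b) + j)) * qpinv q j * qpinv q (N - j)
    * qpinv q (N + d - b - j) * qpinv q (d - (N + d - b) + j)" for j
  have "supp_sum (\<lambda>i. q powi ((N - i) * (b - i)) * qpinv q i * qpinv q (N - i) * qpinv q (b - i)
      * qpinv q (d - b + i)) = supp_sum (\<lambda>i. f (N - i))"
    by (simp add: f_def algebra_simps)
  also have "\<dots> = supp_sum f"
    by (rule supp_sum_reflect)
  also have "\<dots> = qpoch q (nat (N + d)) * qpinv q N * qpinv q d * qpinv q b * qpinv q (N + d - b)"
    unfolding f_def q_vandermonde by (simp add: algebra_simps)
  finally show ?thesis .
qed

lemma q_vandermonde_shifted: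
  assumes "0 \<le> l + n" and "0 \<le> m + n"
  shows "q powi (k^2) * qpoch q (nat (l + m + n - k)) * qpinv q (l - k) * qpinv q (m - k)
    = qpoch q (nat (l + n)) * qpoch q (nat (m + n)) * supp_sum (\<lambda>r. q powi (r^2)
        * qpinv q (l - r) * qpinv q (m - r) * qpinv q (n + r) * (q powi ((r - k) * (n - k)) * qpinv q (r - k)))"
proof -
  define f where "f = (\<lambda>r. q powi (r^2) * qpinv q (l - r) * qpinv q (m - r) * qpinv q (n + r)
    * (q powi ((r - k) * (n - k)) * qpinv q (r - k)))"
  have "f (i + k) = q powi (k^2) * (q powi (i * ((m + n) - (m - k) + i)) * qpinv q i
      * qpinv q ((l - k) - i) * qpinv q ((m - k) - i) * qpinv q ((m + n) - (m - k) + i))" for i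
  proof -
    have "q powi ((i + k)^2) * q powi (i * (n - k)) = q powi (k^2) * q powi (i * ((m + n) - (m - k) + i))"
      by (simp add: powi_add[symmetric] power2_eq_square algebra_simps)
    then show ?thesis
      by (simp add: f_def algebra_simps)
  qed
  then have "supp_sum f = q powi (k^2) * supp_sum (\<lambda>i. q powi (i * ((m + n) - (m - k) + i)) * qpinv q i
      * qpinv q ((l - k) - i) * qpinv q ((m - k) - i) * qpinv q ((m + n) - (m - k) + i))"
    using supp_sum_shift[of f k] by (simp only: supp_sum_cmult)
  also have "\<dots> = qpinv q (l + n) * qpinv q (m + n)
      * (q powi (k^2) * qpoch q (nat (l + m + n - k)) * qpinv q (l - k) * qpinv q (m - k))"
    unfolding q_vandermonde by (simp add: algebra_simps)
  finally show ?thesis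
    using assms unfolding f_def[symmetric] by (simp add: qpoch_mult_eq_iff)
qed

lemma q_binomial_theorem:
  assumes "x \<noteq> 0"
  shows "supp_sum (\<lambda>r. (-1) powi r * q powi (r * (r - 1) div 2) * qbinom q (int N) r * x powi r)
    = (\<Prod>i<N. 1 - x * q ^ i)"
proof (induction N)
  case 0
  show ?case
    by (subst supp_sum_single[of 0]) (auto simp: qbinom_eq_0 qbinom_def qpinv_def qpoch_def)
next
  case (Suc N)
  define t where "t N = (\<lambda>r. (-1) powi r * q powi (r * (r - 1) div 2) * qbinom q (int N) r * x powi r)"
    for N
  have split: "t (Suc N) r = - x * q ^ N * t N (r - 1) + t N r" for r
  proof -
    have "(r - 1) * (r - 1 - 1) div 2 = r * (r - 1) div 2 + 1 - r"
      using triangular_add[of r "-1"] by simp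
    then have "r * (r - 1) div 2 + (int N + 1 - r) = int N + (r - 1) * (r - 1 - 1) div 2"
      by linarith
    then have "q powi (r * (r - 1) div 2) * q powi (int N + 1 - r)
        = q powi (int N) * q powi ((r - 1) * (r - 1 - 1) div 2)"
      by (simp only: powi_add[symmetric])
    moreover have "(-1) powi r = - ((-1) powi (r - 1) :: complex)"
      using power_int_add[of "-1::complex" "r - 1" 1] by simp
    moreover have "x powi r = x * x powi (r - 1)"
      using power_int_add[of x "r - 1" 1] assms by (simp add: mult.commute)
    ultimately show ?thesis
      using qbinom_pascal[of "int N" r] by (simp add: t_def algebra_simps)
  qed
  have "supp_sum (t (Suc N)) = - x * q ^ N * supp_sum (\<lambda>r. t N (r - 1)) + supp_sum (t N)"
    unfolding split supp_sum_cmult[symmetric]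
    by (rule supp_sum_add[of "{0..int N + 1}"]) (auto simp: t_def qbinom_eq_0)
  also have "\<dots> = (1 - x * q ^ N) * supp_sum (t N)"
    using supp_sum_shift[of "t N" "-1"] by (simp add: algebra_simps)
  also have "\<dots> = (\<Prod>i<Suc N. 1 - x * q ^ i)"
    using Suc.IH by (simp add: t_def mult.commute)
  finally show ?case
    by (simp add: t_def)
qed

lemma qpinv_pm_orthogonality_pos:
  assumes "0 < j"
  shows "supp_sum (\<lambda>k. (-1) powi k * q powi (k * (k - 1) div 2) * qpinv_pm q j k) = 0"
proof -
  obtain M where M: "j = int M"
    using assms by (metis zero_less_imp_eq_int)
  define c where "c = (-1) powi j * q powi (j * (j - 1) div 2 - j * j) * qpoch q (nat (2 * j))"
  define f where "f r = (-1) powi r * q powi (r * (r - 1) div 2) * qbinom q (int (2 * M)) r * (q powi (- j)) powi r"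
    for r
  \<comment> \<open>The q-binomial theorem at \<open>x = q^{-j}\<close> vanishes through its factor \<open>i = j\<close>, and the shift
    \<open>r = k + j\<close> turns its left-hand side into a nonzero multiple of our sum.\<close>
  have "1 - q powi (- j) * q ^ M = 0"
    using nonzero by (simp add: M power_int_minus)
  then have "(\<Prod>i<2 * M. 1 - q powi (- j) * q ^ i) = 0"
    using assms M by (intro prod_zero) (auto intro!: bexI[of _ M])
  moreover have "supp_sum f = (\<Prod>i<2 * M. 1 - q powi (- j) * q ^ i)"
    unfolding f_def using nonzero by (intro q_binomial_theorem) simp
  ultimately have "supp_sum f = 0"
    by simp
  moreover have "f (k + j) = c * ((-1) powi k * q powi (k * (k - 1) div 2) * qpinv_pm q j k)" for k
  proof -
    have "(k + j) * (k + j - 1) div 2 + - j * (k + j) = k * (k - 1) div 2 + (j * (j - 1) div 2 - j * j)"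
      using triangular_add[of k j] by (simp add: algebra_simps)
    then have "q powi ((k + j) * (k + j - 1) div 2) * (q powi (- j)) powi (k + j)
        = q powi (k * (k - 1) div 2) * q powi (j * (j - 1) div 2 - j * j)"
      by (simp only: power_int_mult[symmetric] powi_add[symmetric])
    moreover have "(-1) powi (k + j) = (-1) powi k * ((-1) powi j :: complex)"
      by (simp add: power_int_add)
    moreover have "qbinom q (int (2 * M)) (k + j) = qpoch q (nat (2 * j)) * qpinv_pm q j k"
      by (simp add: qbinom_def qpinv_pm_def M algebra_simps)
    ultimately show ?thesis
      by (simp add: f_def c_def algebra_simps)
  qed
  then have "supp_sum f = c * supp_sum (\<lambda>k. (-1) powi k * q powi (k * (k - 1) div 2) * qpinv_pm q j k)"
    using supp_sum_shift[of f j] by (simp add: supp_sum_cmult)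
  moreover have "c \<noteq> 0"
    using nonzero qpoch_nonzero by (simp add: c_def)
  ultimately show ?thesis
    by simp
qed

lemma qpinv_pm_orthogonality:
  "supp_sum (\<lambda>k. (-1) powi k * q powi (k * (k - 1) div 2) * qpinv_pm q j k) = (if j = 0 then 1 else 0)"
proof -
  consider "j < 0" | "j = 0" | "0 < j"
    by linarith
  then show ?thesis
  proof cases
    case 1
    then show ?thesis
      by (simp add: qpinv_pm_neg supp_sum_def)
  next
    case 2
    then show ?thesis
      by (subst supp_sum_single[of 0]) (auto simp: qpinv_pm_eq_0 qpinv_pm_def qpinv_def qpoch_def)
  next
    case 3
    then show ?thesis
      by (simp add: qpinv_pm_orthogonality_pos)
  qed
qed

section \<open>Kernel expansions and the q-Dixon sum\<close>

lemma supp_sum_qpinv_pm_expansion: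
  assumes "\<And>k. X k = c * supp_sum (\<lambda>j. w j * qpinv_pm q j k)" and "\<And>j. a < j \<Longrightarrow> w j = 0"
  shows "supp_sum (\<lambda>k. h k * X k) = c * supp_sum (\<lambda>j. w j * supp_sum (\<lambda>k. h k * qpinv_pm q j k))"
proof -
  have support: "j \<in> {0..a} \<and> k \<in> {-a..a}" if "h k * (w j * qpinv_pm q j k) \<noteq> 0" for j k
  proof -
    have "w j \<noteq> 0" and "\<bar>k\<bar> \<le> j"
      using that qpinv_pm_nonzero_imp by auto
    then have "j \<le> a"
      using assms(2) by (meson not_le)
    then show ?thesis
      using \<open>\<bar>k\<bar> \<le> j\<close> by auto
  qed
  have "supp_sum (\<lambda>k. h k * X k) = c * supp_sum (\<lambda>k. h k * supp_sum (\<lambda>j. w j * qpinv_pm q j k))"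
    by (simp add: assms(1) supp_sum_cmult[symmetric] mult.left_commute)
  also have "\<dots> = c * supp_sum (\<lambda>j. w j * supp_sum (\<lambda>k. h k * qpinv_pm q j k))"
    using support by (subst supp_sum_swap_mult[of "{0..a}" "{-a..a}"]) auto
  finally show ?thesis .
qed

lemma qpinv_pm_mult_expand_square:
  assumes "0 \<le> a" and "0 \<le> b"
  shows "q powi (k^2) * qpinv_pm q a k * qpinv_pm q b k
    = qpinv q (a + b) * supp_sum (\<lambda>j. q powi (j^2) * qpinv q (a - j) * qpinv q (b - j) * qpinv_pm q j k)"
proof -
  \<comment> \<open>The shift \<open>j = i + k\<close> gives q-Vandermonde with \<open>N = a - k\<close>, \<open>b - k\<close> for \<open>b\<close> and
    \<open>d = b + k\<close>; the differences are left unsimplified to match its pattern.\<close>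
  have "supp_sum (\<lambda>j. q powi (j^2) * qpinv q (a - j) * qpinv q (b - j) * qpinv_pm q j k)
      = supp_sum (\<lambda>i. q powi (k^2) * (q powi (i * ((b + k) - (b - k) + i)) * qpinv q i
          * qpinv q ((a - k) - i) * qpinv q ((b - k) - i) * qpinv q ((b + k) - (b - k) + i)))"
    (is "supp_sum ?f = _")
  proof -
    have "q powi ((i + k)^2) = q powi (k^2) * q powi (i * ((b + k) - (b - k) + i))" for i
      unfolding powi_add[symmetric] by (simp add: power2_eq_square algebra_simps)
    then have "?f (i + k) = q powi (k^2) * (q powi (i * ((b + k) - (b - k) + i)) * qpinv q i
          * qpinv q ((a - k) - i) * qpinv q ((b - k) - i) * qpinv q ((b + k) - (b - k) + i))" for i
      by (simp add: qpinv_pm_def algebra_simps)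
    then show ?thesis
      using supp_sum_shift[of ?f k] by simp
  qed
  also have "\<dots> = q powi (k^2) * qpoch q (nat (a + b)) * qpinv_pm q a k * qpinv_pm q b k"
    unfolding supp_sum_cmult q_vandermonde by (simp add: qpinv_pm_def algebra_simps)
  finally show ?thesis
    using assms by (simp add: qpinv_qpoch[of "a + b", symmetric] algebra_simps)
qed

lemma qpinv_pm_mult_expand:
  assumes "0 \<le> a" and "0 \<le> b"
  shows "qpinv_pm q a k * qpinv_pm q b k
    = qpinv q (a + b) * supp_sum (\<lambda>j. q powi ((a - j) * (b - j)) * qpinv q (a - j) * qpinv q (b - j) * qpinv_pm q j k)"
proof -
  have "supp_sum (\<lambda>j. q powi ((a - j) * (b - j)) * qpinv q (a - j) * qpinv q (b - j) * qpinv_pm q j k)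
      = supp_sum (\<lambda>i. q powi (((a - k) - i) * ((b - k) - i)) * qpinv q i
          * qpinv q ((a - k) - i) * qpinv q ((b - k) - i) * qpinv q ((b + k) - (b - k) + i))"
    (is "supp_sum ?f = _")
  proof -
    have "?f (i + k) = q powi (((a - k) - i) * ((b - k) - i)) * qpinv q i
          * qpinv q ((a - k) - i) * qpinv q ((b - k) - i) * qpinv q ((b + k) - (b - k) + i)" for i
      by (simp add: qpinv_pm_def algebra_simps)
    then show ?thesis
      using supp_sum_shift[of ?f k] by simp
  qed
  also have "\<dots> = qpoch q (nat (a + b)) * qpinv_pm q a k * qpinv_pm q b k"
    unfolding q_vandermonde' by (simp add: qpinv_pm_def algebra_simps)
  finally show ?thesis
    using assms by (simp add: qpinv_qpoch[of "a + b", symmetric] algebra_simps)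
qed

lemma qpinv_pm_pair_sum:
  assumes "0 \<le> a"
  shows "supp_sum (\<lambda>k. (-1) powi k * q powi (k * (k - 1) div 2) * qpinv_pm q a k * qpinv_pm q b k)
    = q powi (a * b) * qpinv q a * qpinv q b * qpinv q (a + b)"
proof (cases "b < 0")
  case True
  then show ?thesis
    by (simp add: qpinv_pm_neg qpinv_neg supp_sum_def)
next
  case False
  define w where "w j = q powi ((a - j) * (b - j)) * qpinv q (a - j) * qpinv q (b - j)" for j
  define h where "h k = (-1) powi k * q powi (k * (k - 1) div 2)" for k :: int
  have "qpinv_pm q a k * qpinv_pm q b k = qpinv q (a + b) * supp_sum (\<lambda>j. w j * qpinv_pm q j k)" for k
    using qpinv_pm_mult_expand[OF assms, of b k] False by (simp add: w_def)
  then have "supp_sum (\<lambda>k. h k * (qpinv_pm q a k * qpinv_pm q b k))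
      = qpinv q (a + b) * supp_sum (\<lambda>j. w j * supp_sum (\<lambda>k. h k * qpinv_pm q j k))"
    by (rule supp_sum_qpinv_pm_expansion[where a = a]) (simp add: w_def qpinv_neg)
  also have "\<dots> = qpinv q (a + b) * w 0"
    by (simp add: h_def qpinv_pm_orthogonality supp_sum_single[of 0])
  finally show ?thesis
    by (simp add: h_def w_def algebra_simps)
qed

lemma q_dixon:
  assumes "0 \<le> a" and "0 \<le> b"
  shows "supp_sum (\<lambda>k. (-1) powi k * q powi ((3 * k^2 - k) div 2)
      * qpinv_pm q a k * qpinv_pm q b k * qpinv_pm q c k)
    = qpoch q (nat (a + b + c)) * qpinv q a * qpinv q b * qpinv q c
      * qpinv q (a + b) * qpinv q (a + c) * qpinv q (b + c)"
proof (cases "c < 0")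
  case True
  then show ?thesis
    by (simp add: qpinv_pm_neg qpinv_neg supp_sum_def)
next
  case False
  define w where "w i = q powi (i^2) * qpinv q (b - i) * qpinv q (c - i)" for i
  define h where "h k = (-1) powi k * q powi (k * (k - 1) div 2) * qpinv_pm q a k" for k
  have "q powi ((3 * k^2 - k) div 2) = q powi (k * (k - 1) div 2) * q powi (k^2)" for k
  proof -
    have "3 * k^2 - k = k * (k - 1) + k^2 * 2"
      by (simp add: power2_eq_square algebra_simps)
    then have "(3 * k^2 - k) div 2 = k * (k - 1) div 2 + k^2"
      by simp
    then show ?thesis
      by (simp only: powi_add)
  qed
  then have "supp_sum (\<lambda>k. (-1) powi k * q powi ((3 * k^2 - k) div 2)
        * qpinv_pm q a k * qpinv_pm q b k * qpinv_pm q c k)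
      = supp_sum (\<lambda>k. h k * (q powi (k^2) * qpinv_pm q b k * qpinv_pm q c k))"
    by (simp add: h_def algebra_simps)
  also have "\<dots> = qpinv q (b + c) * supp_sum (\<lambda>i. w i * supp_sum (\<lambda>k. h k * qpinv_pm q i k))"
    using qpinv_pm_mult_expand_square[OF assms(2), of c] False
    by (intro supp_sum_qpinv_pm_expansion[where a = b]) (simp_all add: w_def qpinv_neg)
  also have "\<dots> = qpinv q (b + c)
      * supp_sum (\<lambda>i. w i * (q powi (a * i) * qpinv q a * qpinv q i * qpinv q (a + i)))"
    using assms by (simp add: h_def qpinv_pm_pair_sum)
  also have "\<dots> = qpinv q (b + c) * qpinv q a * supp_sum (\<lambda>i. q powi (i * (a + c - c + i))
      * qpinv q i * qpinv q (b - i) * qpinv q (c - i) * qpinv q (a + c - c + i))"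
  proof -
    have "q powi (i^2) * q powi (a * i) = q powi (i * (a + c - c + i))" for i
      by (simp add: powi_add[symmetric] power2_eq_square algebra_simps)
    then show ?thesis
      by (simp add: w_def supp_sum_cmult[symmetric] algebra_simps)
  qed
  finally show ?thesis
    unfolding q_vandermonde by (simp add: algebra_simps)
qed

end

section \<open>The two sides of the identities\<close>

definition pos_weight :: "complex \<Rightarrow> int \<Rightarrow> int \<Rightarrow> int \<Rightarrow> int \<Rightarrow> int \<Rightarrow> complex" where
  "pos_weight q e l m n k = q powi (k^2 + e * k) * qpoch q (nat (l + m + n - k))
    * qpinv q k * qpinv q (l - k) * qpinv q (m - k) * qpinv q (n - k)"

definition pos_sum :: "complex \<Rightarrow> int \<Rightarrow> int \<Rightarrow> int \<Rightarrow> int \<Rightarrow> int \<Rightarrow> complex" where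
  "pos_sum q e l m n v = supp_sum (\<lambda>k. pos_weight q e l m n k * qpinv q (v + k))"

definition alt_weight :: "complex \<Rightarrow> int \<Rightarrow> int \<Rightarrow> int \<Rightarrow> int \<Rightarrow> int \<Rightarrow> complex" where
  "alt_weight q e l m n k = (-1) powi k * q powi ((5 * k^2 - k) div 2 + e * k)
    * qpinv_pm q l k * qpinv_pm q m k * qpinv_pm q n k"

definition alt_sum :: "complex \<Rightarrow> int \<Rightarrow> int \<Rightarrow> int \<Rightarrow> int \<Rightarrow> int \<Rightarrow> complex" where
  "alt_sum q e l m n v = supp_sum (\<lambda>k. alt_weight q e l m n k * qpinv_pm q v k)"

text \<open>The exponent shift \<open>e\<close> inserts a factor \<open>q^{ek}\<close>: the left-hand sides of the theorem are
  \<^const>\<open>pos_sum\<close> with \<open>e = 0, 1\<close>, and its right-hand sides are combinations of \<^const>\<open>alt_sum\<close>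
  with \<open>e = -1, 0, 1\<close>.\<close>

lemma pos_weight_eq_0: "k \<notin> {0..l} \<Longrightarrow> pos_weight q e l m n k = 0"
  by (auto simp: pos_weight_def qpinv_neg)

lemma alt_weight_eq_0: "k \<notin> {-l..l} \<Longrightarrow> alt_weight q e l m n k = 0"
  by (auto simp: alt_weight_def qpinv_pm_eq_0)

lemma suminf_eq_pos_sum:
  fixes e l m n u :: nat
  shows "(\<Sum>k. q ^ (k^2 + e * k) * qpoch q (l + m + n - k)
      * qpinv q (int k) * qpinv q (int l - int k) * qpinv q (int m - int k)
      * qpinv q (int n - int k) * qpinv q (int u + int k))
    = pos_sum q (int e) (int l) (int m) (int n) (int u)"
proof -
  have "q powi (int k ^ 2 + int e * int k) = q ^ (k^2 + e * k)" for k
    by (metis of_nat_add of_nat_mult of_nat_power power_int_of_nat)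
  moreover have "nat (int l + int m + int n - int k) = l + m + n - k" for k
    by arith
  ultimately have term_eq: "q ^ (k^2 + e * k) * qpoch q (l + m + n - k)
      * qpinv q (int k) * qpinv q (int l - int k) * qpinv q (int m - int k)
      * qpinv q (int n - int k) * qpinv q (int u + int k)
    = pos_weight q (int e) (int l) (int m) (int n) (int k) * qpinv q (int u + int k)" for k
    by (simp add: pos_weight_def)
  show ?thesis
    unfolding term_eq pos_sum_def
    by (rule suminf_eq_supp_sum[where N = l]) (simp add: pos_weight_eq_0)
qed

context generic_q
begin

lemma pos_sum_expand:
  assumes "0 \<le> l + n" and "0 \<le> m + n"
  shows "pos_sum q 0 l m n u
    = qpoch q (nat (l + n)) * qpoch q (nat (m + n)) * qpinv q n * qpinv q (n + u)
      * supp_sum (\<lambda>r. q powi (r^2) * qpoch q (nat (n + u + r))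
          * qpinv q r * qpinv q (l - r) * qpinv q (m - r) * qpinv q (n + r) * qpinv q (u + r))"
proof -
  define h where "h k = qpinv q k * qpinv q (n - k) * qpinv q (u + k)" for k
  define w where "w r = q powi (r^2) * qpinv q (l - r) * qpinv q (m - r) * qpinv q (n + r)" for r
  define g where "g r k = q powi ((r - k) * (n - k)) * qpinv q (r - k)" for r k
  have "pos_sum q 0 l m n u
      = supp_sum (\<lambda>k. h k * (q powi (k^2) * qpoch q (nat (l + m + n - k)) * qpinv q (l - k) * qpinv q (m - k)))"
    by (simp add: pos_sum_def pos_weight_def h_def mult_ac)
  also have "\<dots> = qpoch q (nat (l + n)) * qpoch q (nat (m + n))
      * supp_sum (\<lambda>k. h k * supp_sum (\<lambda>r. w r * g r k))"
    unfolding q_vandermonde_shifted[OF assms] by (simp add: w_def g_def supp_sum_cmult[symmetric] mult_ac)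
  also have "\<dots> = qpoch q (nat (l + n)) * qpoch q (nat (m + n))
      * supp_sum (\<lambda>r. w r * supp_sum (\<lambda>k. h k * g r k))"
    by (subst supp_sum_swap_mult[of "{0..l}" "{0..n}"]) (auto simp: h_def w_def g_def qpinv_eq_0_iff)
  also have "\<dots> = qpoch q (nat (l + n)) * qpoch q (nat (m + n))
      * supp_sum (\<lambda>r. w r * (qpoch q (nat (r + (n + u)))
          * qpinv q r * qpinv q n * qpinv q (n + u) * qpinv q (r + (n + u) - n)))"
    using q_vandermonde'[of r n "n + u" for r]
    by (simp add: h_def g_def mult_ac)
  finally show ?thesis
    by (simp add: w_def supp_sum_cmult[symmetric] algebra_simps)
qed

lemma alt_sum_expand:
  assumes "0 \<le> l" and "0 \<le> m" and "0 \<le> n" and "0 \<le> u"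
  shows "alt_sum q 0 l m n u
    = qpinv q (l + m) * qpinv q n * qpinv q u * qpinv q (n + u)
      * supp_sum (\<lambda>r. q powi (r^2) * qpoch q (nat (n + u + r))
          * qpinv q r * qpinv q (l - r) * qpinv q (m - r) * qpinv q (n + r) * qpinv q (u + r))"
proof -
  define w where "w r = q powi (r^2) * qpinv q (l - r) * qpinv q (m - r)" for r
  define h where "h k = (-1) powi k * q powi ((3 * k^2 - k) div 2) * qpinv_pm q n k * qpinv_pm q u k"
    for k
  have "(5 * k^2 - k) div 2 = (3 * k^2 - k) div 2 + k^2" for k :: int
  proof -
    have "5 * k^2 - k = (3 * k^2 - k) + k^2 * 2"
      by simp
    then show ?thesis
      by simp
  qed
  then have "alt_sum q 0 l m n u = supp_sum (\<lambda>k. h k * (q powi (k^2) * qpinv_pm q l k * qpinv_pm q m k))"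
    by (simp add: alt_sum_def alt_weight_def h_def powi_add mult_ac)
  also have "\<dots> = qpinv q (l + m) * supp_sum (\<lambda>r. w r * supp_sum (\<lambda>k. h k * qpinv_pm q r k))"
    using qpinv_pm_mult_expand_square[OF assms(1,2)]
    by (intro supp_sum_qpinv_pm_expansion[where a = l]) (simp_all add: w_def qpinv_neg)
  also have "\<dots> = qpinv q (l + m) * supp_sum (\<lambda>r. w r * (qpoch q (nat (n + u + r))
      * qpinv q n * qpinv q u * qpinv q r * qpinv q (n + u) * qpinv q (n + r) * qpinv q (u + r)))"
    using assms by (simp add: h_def q_dixon)
  finally show ?thesis
    by (simp add: w_def supp_sum_cmult[symmetric] mult_ac)
qed

lemma pos_sum_eq_alt_sum:
  assumes "0 \<le> l" and "0 \<le> m" and "0 \<le> n" and "0 \<le> v"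
  shows "pos_sum q 0 l m n v
    = qpoch q (nat (l + m)) * qpoch q (nat (l + n)) * qpoch q (nat (m + n)) * qpoch q (nat v)
      * alt_sum q 0 l m n v"
proof -
  define J where "J = supp_sum (\<lambda>r. q powi (r^2) * qpoch q (nat (n + v + r))
    * qpinv q r * qpinv q (l - r) * qpinv q (m - r) * qpinv q (n + r) * qpinv q (v + r))"
  have "qpoch q (nat (l + m)) * qpoch q (nat (l + n)) * qpoch q (nat (m + n)) * qpoch q (nat v)
      * alt_sum q 0 l m n v
    = (qpinv q (l + m) * qpoch q (nat (l + m))) * (qpinv q v * qpoch q (nat v))
      * (qpoch q (nat (l + n)) * qpoch q (nat (m + n)) * qpinv q n * qpinv q (n + v) * J)"
    unfolding alt_sum_expand[OF assms] J_def by (simp add: mult_ac)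
  also have "\<dots> = pos_sum q 0 l m n v"
    using pos_sum_expand[of l n m v] assms by (simp add: J_def qpinv_qpoch)
  finally show ?thesis ..
qed

lemma alt_sum_reflect: "alt_sum q (1 - e) l m n v = alt_sum q e l m n v"
proof -
  define f where "f = (\<lambda>k. (-1) powi k * q powi ((5 * k^2 - k) div 2 + e * k)
    * qpinv_pm q l k * qpinv_pm q m k * qpinv_pm q n k * qpinv_pm q v k)"
  have "(5 * k^2 - k) div 2 + (1 - e) * k = (5 * (- k)^2 - (- k)) div 2 + e * (- k)" for k :: int
  proof -
    have "5 * (- k)^2 - (- k) = (5 * k^2 - k) + k * 2"
      by simp
    then show ?thesis
      by (simp add: algebra_simps)
  qed
  then have "alt_sum q (1 - e) l m n v = supp_sum (\<lambda>k. f (0 - k))"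
    unfolding alt_sum_def alt_weight_def f_def
    by (simp only: diff_0 qpinv_pm_uminus power_int_minus_one_minus)
  also have "\<dots> = alt_sum q e l m n v"
    unfolding supp_sum_reflect by (simp only: alt_sum_def alt_weight_def f_def)
  finally show ?thesis .
qed

lemma pos_weight_shift: "pos_weight q (e + s) l m n k = q powi (s * k) * pos_weight q e l m n k"
proof -
  have "q powi (k^2 + (e + s) * k) = q powi (s * k) * q powi (k^2 + e * k)"
    by (simp add: powi_add[symmetric] algebra_simps)
  then show ?thesis
    by (simp add: pos_weight_def mult_ac)
qed

lemma alt_weight_shift: "alt_weight q (e + s) l m n k = q powi (s * k) * alt_weight q e l m n k"
proof -
  have "q powi ((5 * k^2 - k) div 2 + (e + s) * k) = q powi (s * k) * q powi ((5 * k^2 - k) div 2 + e * k)"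
    by (simp add: powi_add[symmetric] algebra_simps)
  then show ?thesis
    by (simp add: alt_weight_def mult_ac)
qed

lemma pos_sum_diff: "pos_sum q e l m n v - pos_sum q e l m n (v - 1) = q powi v * pos_sum q (e + 1) l m n v"
proof -
  have "pos_weight q e l m n k * qpinv q (v + k) - pos_weight q e l m n k * qpinv q (v - 1 + k)
      = q powi v * (pos_weight q (e + 1) l m n k * qpinv q (v + k))" for k
  proof -
    have rec: "qpinv q (v - 1 + k) = (1 - q powi v * q powi k) * qpinv q (v + k)"
      using qpinv_rec[of "v - 1 + k"] powi_add[of v k] by simp
    show ?thesis
      unfolding rec pos_weight_shift[of e 1] by (simp add: algebra_simps)
  qed
  then show ?thesis
    unfolding pos_sum_def supp_sum_cmult[symmetric]
    by (subst supp_sum_diff[of "{0..l}", symmetric]) (auto simp: pos_weight_eq_0)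
qed

lemma alt_sum_pred:
  "alt_sum q e l m n (v - 1) = (1 + q powi (2 * v)) * alt_sum q e l m n v
    - q powi v * alt_sum q (e - 1) l m n v - q powi v * alt_sum q (e + 1) l m n v"
proof -
  have pred: "qpinv_pm q (v - 1) k
      = (1 + q powi (2 * v) - q powi v * q powi (- k) - q powi v * q powi k) * qpinv_pm q v k" for k
  proof -
    have "qpinv q (v - 1 - k) = (1 - q powi v * q powi (- k)) * qpinv q (v - k)"
      using qpinv_rec[of "v - 1 - k"] powi_add[of v "- k"] by simp
    moreover have "qpinv q (v - 1 + k) = (1 - q powi v * q powi k) * qpinv q (v + k)"
      using qpinv_rec[of "v - 1 + k"] powi_add[of v k] by simp
    ultimately have "qpinv_pm q (v - 1) k
        = (1 - q powi v * q powi (- k)) * (1 - q powi v * q powi k) * qpinv_pm q v k"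
      by (simp add: qpinv_pm_def mult_ac)
    moreover have "q powi v * q powi (- k) * (q powi v * q powi k) = q powi (2 * v)"
      by (simp add: powi_add[symmetric])
    moreover have "(1 - x) * (1 - y) = 1 + x * y - x - y" for x y :: complex
      by (simp add: algebra_simps)
    ultimately show ?thesis
      by simp
  qed
  have "alt_weight q (e - 1) l m n k = q powi (- k) * alt_weight q e l m n k"
    and "alt_weight q (e + 1) l m n k = q powi k * alt_weight q e l m n k" for k
    using alt_weight_shift[of e "-1"] alt_weight_shift[of e 1] by simp_all
  then have "alt_weight q e l m n k * qpinv_pm q (v - 1) k
      = (1 + q powi (2 * v)) * (alt_weight q e l m n k * qpinv_pm q v k)
        - q powi v * (alt_weight q (e - 1) l m n k * qpinv_pm q v k)
        - q powi v * (alt_weight q (e + 1) l m n k * qpinv_pm q v k)" for k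
    unfolding pred by (simp add: algebra_simps)
  then show ?thesis
    unfolding alt_sum_def supp_sum_cmult[symmetric]
    by (subst supp_sum_diff[of "{-l..l}", symmetric] supp_sum_diff[of "{-l..l}"]; auto simp: alt_weight_eq_0)+
qed

lemma infsum_eq_alt_sum_diff:
  "(\<Sum>\<^sub>\<infinity>k::int. (-1) powi k * q powi ((5 * k^2 - k) div 2 + e * k) * c
      * qpinv q (l - k) * qpinv q (m - k) * qpinv q (n - k) * qpinv q (v - k)
      * qpinv q (l + k) * qpinv q (m + k) * qpinv q (n + k) * qpinv q (v + k - 1))
    = c * (alt_sum q e l m n v - q powi v * alt_sum q (e + 1) l m n v)"
proof -
  have term_eq: "(-1) powi k * q powi ((5 * k^2 - k) div 2 + e * k) * c
      * qpinv q (l - k) * qpinv q (m - k) * qpinv q (n - k) * qpinv q (v - k)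
      * qpinv q (l + k) * qpinv q (m + k) * qpinv q (n + k) * qpinv q (v + k - 1)
    = c * (alt_weight q e l m n k * qpinv_pm q v k - q powi v * (alt_weight q (e + 1) l m n k * qpinv_pm q v k))"
    for k
  proof -
    have "qpinv q (v + k - 1) = (1 - q powi v * q powi k) * qpinv q (v + k)"
      using qpinv_rec[of "v + k - 1"] powi_add[of v k] by simp
    then have "(-1) powi k * q powi ((5 * k^2 - k) div 2 + e * k) * c
        * qpinv q (l - k) * qpinv q (m - k) * qpinv q (n - k) * qpinv q (v - k)
        * qpinv q (l + k) * qpinv q (m + k) * qpinv q (n + k) * qpinv q (v + k - 1)
      = c * (alt_weight q e l m n k * qpinv_pm q v k) * (1 - q powi v * q powi k)"
      by (simp add: alt_weight_def qpinv_pm_def mult_ac)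
    also have "\<dots> = c * (alt_weight q e l m n k * qpinv_pm q v k
        - q powi v * (alt_weight q (e + 1) l m n k * qpinv_pm q v k))"
      unfolding alt_weight_shift[of e 1] by (simp add: algebra_simps)
    finally show ?thesis .
  qed
  have "(\<Sum>\<^sub>\<infinity>k::int. (-1) powi k * q powi ((5 * k^2 - k) div 2 + e * k) * c
      * qpinv q (l - k) * qpinv q (m - k) * qpinv q (n - k) * qpinv q (v - k)
      * qpinv q (l + k) * qpinv q (m + k) * qpinv q (n + k) * qpinv q (v + k - 1))
    = supp_sum (\<lambda>k. c * (alt_weight q e l m n k * qpinv_pm q v k
        - q powi v * (alt_weight q (e + 1) l m n k * qpinv_pm q v k)))"
    unfolding term_eq by (rule infsum_eq_supp_sum[of "{-l..l}"]) (simp_all add: alt_weight_eq_0)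
  also have "\<dots> = c * (supp_sum (\<lambda>k. alt_weight q e l m n k * qpinv_pm q v k)
      - supp_sum (\<lambda>k. q powi v * (alt_weight q (e + 1) l m n k * qpinv_pm q v k)))"
    by (subst supp_sum_cmult) (subst supp_sum_diff[of "{-l..l}"], auto simp: alt_weight_eq_0)
  also have "\<dots> = c * (alt_sum q e l m n v - q powi v * alt_sum q (e + 1) l m n v)"
    by (simp only: alt_sum_def supp_sum_cmult)
  finally show ?thesis .
qed

lemma pos_sum_0_eq_alt_sum_diff:
  assumes "0 \<le> l" and "0 \<le> m" and "0 \<le> n" and "1 \<le> u"
  shows "pos_sum q 0 l m n u
    = qpoch q (nat (l + m)) * qpoch q (nat (l + n)) * qpoch q (nat (m + n)) * qpoch q (nat (u - 1))
      * (alt_sum q 0 l m n u - q powi u * alt_sum q 1 l m n u)"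
proof -
  have reflect: "alt_sum q 1 l m n u = alt_sum q 0 l m n u"
    using alt_sum_reflect[of 0] by simp
  have rec: "qpoch q (nat u) = qpoch q (nat (u - 1)) * (1 - q powi u)"
    using qpoch_nat_succ[of "u - 1"] assms by simp
  have u0: "0 \<le> u"
    using assms(4) by simp
  show ?thesis
    unfolding pos_sum_eq_alt_sum[OF assms(1-3) u0] rec reflect by (simp add: algebra_simps)
qed

lemma pos_sum_1_eq_alt_sum_diff:
  assumes "0 \<le> l" and "0 \<le> m" and "0 \<le> n" and "1 \<le> u"
  shows "pos_sum q 1 l m n u
    = qpoch q (nat (l + m)) * qpoch q (nat (l + n)) * qpoch q (nat (m + n)) * qpoch q (nat (u - 1))
      * (alt_sum q (-1) l m n u - q powi u * alt_sum q 0 l m n u)"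
proof -
  define C where "C = qpoch q (nat (l + m)) * qpoch q (nat (l + n)) * qpoch q (nat (m + n))"
  define A where "A = alt_sum q 0 l m n u"
  have u0: "0 \<le> u" and u1: "0 \<le> u - 1"
    using assms(4) by simp_all
  have rec: "qpoch q (nat u) = qpoch q (nat (u - 1)) * (1 - q powi u)"
    using qpoch_nat_succ[of "u - 1"] assms by simp
  have pred: "alt_sum q 0 l m n (u - 1)
      = (1 + q powi u * q powi u) * A - q powi u * alt_sum q (-1) l m n u - q powi u * A"
    using alt_sum_pred[of 0 l m n u] alt_sum_reflect[of 0 l m n u] powi_add[of u u] by (simp add: A_def)
  have "q powi u * pos_sum q 1 l m n u = pos_sum q 0 l m n u - pos_sum q 0 l m n (u - 1)"
    using pos_sum_diff[of 0] by simp
  also have "\<dots> = C * qpoch q (nat (u - 1)) * ((1 - q powi u) * A - alt_sum q 0 l m n (u - 1))"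
    using assms unfolding pos_sum_eq_alt_sum[OF assms(1-3) u0] pos_sum_eq_alt_sum[OF assms(1-3) u1] rec
    by (simp add: C_def A_def algebra_simps)
  also have "\<dots> = q powi u * (C * qpoch q (nat (u - 1)) * (alt_sum q (-1) l m n u - q powi u * A))"
    unfolding pred by (simp add: algebra_simps)
  finally show ?thesis
    using nonzero by (simp add: C_def A_def)
qed

end

theorem corollary5p4:
  fixes q :: complex and l m n u :: nat
  assumes "0 < norm q" and "norm q < 1" and "u \<ge> 1"
  shows "(\<Sum>k. q ^ (k^2) * qpoch q (l + m + n - k)
            * qpinv q (int k) * qpinv q (int l - int k) * qpinv q (int m - int k)
            * qpinv q (int n - int k) * qpinv q (int u + int k))
       = (\<Sum>\<^sub>\<infinity>k::int. (-1) powi k * q powi ((5 * k^2 - k) div 2)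
            * qpoch q (l + m) * qpoch q (l + n) * qpoch q (m + n) * qpoch q (u - 1)
            * qpinv q (int l - k) * qpinv q (int m - k) * qpinv q (int n - k)
            * qpinv q (int u - k) * qpinv q (int l + k) * qpinv q (int m + k)
            * qpinv q (int n + k) * qpinv q (int u + k - 1))
       \<and> (\<Sum>k. q ^ (k^2 + k) * qpoch q (l + m + n - k)
            * qpinv q (int k) * qpinv q (int l - int k) * qpinv q (int m - int k)
            * qpinv q (int n - int k) * qpinv q (int u + int k))
       = (\<Sum>\<^sub>\<infinity>k::int. (-1) powi k * q powi ((5 * k^2 - 3 * k) div 2)
            * qpoch q (l + m) * qpoch q (m + n) * qpoch q (l + n) * qpoch q (u - 1)
            * qpinv q (int l - k) * qpinv q (int m - k) * qpinv q (int n - k)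
            * qpinv q (int u - k) * qpinv q (int l + k) * qpinv q (int m + k)
            * qpinv q (int n + k) * qpinv q (int u + k - 1))"
proof -
  interpret generic_q q
  proof
    show "q \<noteq> 0"
      using assms(1) by auto
    show "q ^ k \<noteq> 1" if "k > 0" for k
      using assms(2) that by (metis norm_one norm_power power_less_one_iff norm_ge_zero less_irrefl)
  qed
  have l: "0 \<le> int l" and m: "0 \<le> int m" and n: "0 \<le> int n" and u: "1 \<le> int u"
    using assms(3) by simp_all
  have u_pred: "nat (int u - 1) = u - 1"
    by simp
  have exponent: "(5 * k^2 - 3 * k) div 2 = (5 * k^2 - k) div 2 + -1 * k" for k :: int
  proof -
    have "5 * k^2 - k = (5 * k^2 - 3 * k) + k * 2"
      by simp
    then show ?thesis
      by simp
  qed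
  show ?thesis
    unfolding exponent
    using suminf_eq_pos_sum[where e = 0] pos_sum_0_eq_alt_sum_diff[OF l m n u]
      infsum_eq_alt_sum_diff[where e = 0 and l = "int l" and m = "int m" and n = "int n" and v = "int u"
        and c = "qpoch q (l + m) * qpoch q (l + n) * qpoch q (m + n) * qpoch q (u - 1)"]
      suminf_eq_pos_sum[where e = 1] pos_sum_1_eq_alt_sum_diff[OF l m n u]
      infsum_eq_alt_sum_diff[where e = "-1" and l = "int l" and m = "int m" and n = "int n" and v = "int u"
        and c = "qpoch q (l + m) * qpoch q (l + n) * qpoch q (m + n) * qpoch q (u - 1)"]
    by (simp add: mult_ac nat_int_add u_pred)
qed

end
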